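(* Let $n\ge 1$, let $\rho\in\mathbb{R}$, and let $H_n$ be the $(2n+1)$-dimensional Heisenberg group with left-invariant frame $e_1,\dots,e_{2n+1}$ as described in the context, $N=2n+1$. Let $g_0$ be a left-invariant metric on $H_n$ which is diagonal in this frame, and let $g(t)$ be a solution of the Ricci–Bourguignon flow $\frac{\partial}{\partial t}g(t)=-2\,\mathrm{Ric}(g(t))+2\rho R(g(t))g(t)$, $g(0)=g_0$, by left-invariant metrics diagonal in this frame, with components $g_I(t)=g(t)(e_I,e_I)$. Then: (a) $\frac{d}{dt}\frac{g_i(t)}{g_{i+n}(t)}=0$ for $1\le i\le n$; (b) $\frac{d}{dt}\Big(g_1(t)\cdots g_n(t)\,g_N(t)^{\frac{1-n\rho}{1+\rho}}\Big)=\frac{d}{dt}\Big(g_{1+n}(t)\cdots g_{2n}(t)\,g_N(t)^{\frac{1-n\rho}{1+\rho}}\Big)=0$; (c) if $\rho<0$ and $G_N(t)=\int_0^t g_N(r)\,dr$, then $\lim_{t\to+\infty}G_N(t)=+\infty$; (d) if moreover $g_i(0)g_{n+i}(0)=g_1(0)g_{1+n}(0)$ for all $1\le i\le n$, then the solution has the form $g_j(t)=g_j(0)(1+bt)^{\frac{1-n\rho}{n+2-n\rho}}$ for $1\le j\le 2n$, and $g_N(t)=g_N(0)(1+bt)^{\frac{n+n\rho}{n\rho-n-2}}$, where $b=(n+2-n\rho)\frac{g_N(0)}{g_1(0)g_{1+n}(0)}$.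
   Context: The Heisenberg group $H_n$ is $\mathbb{R}^{2n+1}$ with coordinates $(x,y,z)$, $x=(x^1,\dots,x^n)$, $y=(x^{n+1},\dots,x^{2n})$, $z=x^{2n+1}$, and product $(x,y,z)\circ(x',y',z')=(x+x',y+y',z+z'+x\cdot y')$, where $x\cdot y'$ is the Euclidean inner product. The left-invariant vector fields $e_i=\partial_i$, $e_{n+i}=\partial_{n+i}+x^i\partial_{2n+1}$ ($1\le i\le n$), $e_{2n+1}=\partial_{2n+1}$ form a frame whose only nonzero brackets are $[e_i,e_{n+i}]=e_{2n+1}$, $1\le i\le n$. A left-invariant metric $g$ is diagonal if $g(e_I,e_J)=0$ for $I\neq J$; write $g_I=g(e_I,e_I)$. $\mathrm{Ric}$ denotes the Ricci tensor and $R$ the scalar curvature. For diagonal left-invariant metrics the Ricci tensor is diagonal in this frame, with $\mathrm{Ric}(e_i,e_i)=-\frac{g_N}{2g_{n+i}}$, $\mathrm{Ric}(e_{n+i},e_{n+i})=-\frac{g_N}{2g_i}$, $\mathrm{Ric}(e_N,e_N)=\frac12 g_N^2\Sigma$, $R=-\frac12 g_N\Sigma$, where $\Sigma=\sum_{k=1}^n\frac{1}{g_kg_{n+k}}$; thus the flow is the ODE system $g_i'=\frac{g_N}{g_{i+n}}-\rho g_ig_N\Sigma$, $g_{i+n}'=\frac{g_N}{g_i}-\rho g_{i+n}g_N\Sigma$, $g_N'=-(1+\rho)g_N^2\Sigma$. In part (c) the solution is understood to be defined for all $t\ge 0$; in part (d) the formula is understood for $t$ with $1+bt>0$ (and $n+2-n\rho\ne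 0$). *)

theory Defs
  imports "HOL-Analysis.Analysis"
begin

text \<open>A diagonal left-invariant metric on H_n is encoded by its components
  g I t = g(t)(e_I,e_I), I = 1..2n+1 (N = 2n+1), t the flow time.\<close>

definition Sigma_H :: "nat \<Rightarrow> (nat \<Rightarrow> real \<Rightarrow> real) \<Rightarrow> real \<Rightarrow> real" where
  "Sigma_H n g t = (\<Sum>k=1..n. 1 / (g k t * g (n + k) t))"

definition Ric_H :: "nat \<Rightarrow> (nat \<Rightarrow> real \<Rightarrow> real) \<Rightarrow> nat \<Rightarrow> real \<Rightarrow> real" where
  "Ric_H n g I t =
     (if 1 \<le> I \<and> I \<le> n then - g (2*n+1) t / (2 * g (n + I) t)
      else if n < I \<and> I \<le> 2*n then - g (2*n+1) t / (2 * g (I - n) t)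
      else if I = 2*n+1 then (1/2) * (g (2*n+1) t)^2 * Sigma_H n g t
      else 0)"

definition scal_H :: "nat \<Rightarrow> (nat \<Rightarrow> real \<Rightarrow> real) \<Rightarrow> real \<Rightarrow> real" where
  "scal_H n g t = - (1/2) * g (2*n+1) t * Sigma_H n g t"

definition RB_solution :: "nat \<Rightarrow> real \<Rightarrow> (nat \<Rightarrow> real \<Rightarrow> real) \<Rightarrow> real set \<Rightarrow> bool" where
  "RB_solution n \<rho> g J \<longleftrightarrow>
     is_interval J \<and> 0 \<in> J \<and>
     (\<forall>I\<in>{1..2*n+1}. \<forall>t\<in>J. 0 < g I t \<and>
        (g I has_real_derivative
           (-2 * Ric_H n g I t + 2 * \<rho> * scal_H n g t * g I t)) (at t within J))"

end

theory Submission
  imports Defs "HOL-Real_Asymp.Real_Asymp"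
begin

text \<open>Write \<open>N = g\<^sub>2\<^sub>n\<^sub>+\<^sub>1\<close>, \<open>P\<^sub>i = g\<^sub>i g\<^sub>n\<^sub>+\<^sub>i\<close> and \<open>\<Sigma> = \<Sum>\<^sub>i 1/P\<^sub>i\<close>.
  Apart from (a), a direct computation, everything rests on three logarithmic derivatives: those
  of \<open>g\<^sub>1\<cdots>g\<^sub>n\<close> and of \<open>g\<^sub>n\<^sub>+\<^sub>1\<cdots>g\<^sub>2\<^sub>n\<close> are both \<open>(1 - n\<rho>) N\<Sigma>\<close>, that of \<open>N\<close> is \<open>-(1 + \<rho>) N\<Sigma>\<close>.
  This gives (b), and since \<open>(1 - n\<rho>) + n(1 + \<rho>) = n + 1\<close>, a combination of these logarithms
  is a primitive of \<open>N\<Sigma>\<close>. As \<open>P\<^sub>i' = 2N - 2\<rho>P\<^sub>iN\<Sigma>\<close>, each difference \<open>P\<^sub>i - P\<^sub>j\<close> then solves a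
  linear ODE with explicit integrating factor, so it vanishes identically once it vanishes at \<open>0\<close>.
  For \<open>\<rho> < 0\<close> every \<open>P\<^sub>i\<close> increases, so \<open>\<Sigma>\<close> decreases, \<open>(1/N)' = (1 + \<rho>)\<Sigma> \<le> \<Sigma>(0)\<close>, and
  \<open>N \<ge> 1/(a + Ct)\<close> has a divergent integral. In the balanced case \<open>P\<^sub>1/N\<close> grows linearly with
  slope \<open>n + 2 - n\<rho>\<close>, which turns every equation of the flow into \<open>f' = c b/(1 + bt) f\<close>.\<close>

lemma has_real_derivative_nonneg_imp_le:
  fixes f f' :: "real \<Rightarrow> real"
  assumes S: "is_interval S"
    and deriv: "\<And>x. x \<in> S \<Longrightarrow> (f has_real_derivative f' x) (at x within S)"
    and nonneg: "\<And>x. x \<in> S \<Longrightarrow> 0 \<le> f' x"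
    and "a \<in> S" "b \<in> S" "a \<le> b"
  shows "f a \<le> f b"
proof (rule DERIV_nonneg_imp_increasing_open[OF \<open>a \<le> b\<close>])
  have sub: "{a..b} \<subseteq> S"
    using S \<open>a \<in> S\<close> \<open>b \<in> S\<close> by (meson atLeastAtMost_iff is_interval_1 subsetI)
  show "continuous_on {a..b} f"
    using continuous_on_subset[OF DERIV_continuous_on[OF deriv] sub] by blast
  fix x assume x: "a < x" "x < b"
  have "{a<..<b} \<subseteq> S"
    using sub by auto
  then have "x \<in> interior S"
    using x interior_maximal[of "{a<..<b}" S] by auto
  then have "at x within S = at x"
    by (rule at_within_interior)
  moreover have "x \<in> S"
    using x sub by auto
  ultimately show "\<exists>y. DERIV f x :> y \<and> 0 \<le> y"
    using deriv[of x] nonneg[of x] by auto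
qed

lemma has_real_derivative_zero_imp_eq:
  fixes f :: "real \<Rightarrow> real"
  assumes "is_interval S" "\<And>x. x \<in> S \<Longrightarrow> (f has_real_derivative 0) (at x within S)"
    and "a \<in> S" "b \<in> S"
  shows "f a = f b"
  using has_field_derivative_zero_constant[of S f] assms is_interval_convex_1 by metis

lemma linear_ode_eq_exp:
  fixes y u u' :: "real \<Rightarrow> real"
  assumes S: "is_interval S" "a \<in> S" "t \<in> S"
    and du: "\<And>s. s \<in> S \<Longrightarrow> (u has_real_derivative u' s) (at s within S)"
    and dy: "\<And>s. s \<in> S \<Longrightarrow> (y has_real_derivative u' s * y s) (at s within S)"
  shows "y t = y a * exp (u t - u a)"
proof -
  have "((\<lambda>s. y s * exp (- u s)) has_real_derivative 0) (at s within S)" if "s \<in> S" for s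
    using DERIV_mult[OF dy[OF that] DERIV_chain2[OF DERIV_exp DERIV_minus[OF du[OF that]]]]
    by (rule DERIV_cong) simp
  then have "y t * exp (- u t) = y a * exp (- u a)"
    using has_real_derivative_zero_imp_eq[OF S(1) _ S(3) S(2)] by blast
  then show ?thesis
    by (simp add: exp_diff exp_minus field_simps)
qed

lemma has_real_derivative_via_ln:
  fixes F L :: "real \<Rightarrow> real"
  assumes pos: "\<And>s. s \<in> S \<Longrightarrow> 0 < F s" and ln_eq: "\<And>s. s \<in> S \<Longrightarrow> ln (F s) = L s"
    and "t \<in> S" and dL: "(L has_real_derivative D) (at t within S)"
  shows "(F has_real_derivative F t * D) (at t within S)"
proof (rule has_field_derivative_transform_within[OF _ zero_less_one \<open>t \<in> S\<close>])
  have "exp (L t) = F t"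
    using pos ln_eq \<open>t \<in> S\<close> by (metis exp_ln)
  then show "((\<lambda>s. exp (L s)) has_real_derivative F t * D) (at t within S)"
    using DERIV_chain2[OF DERIV_exp dL] by simp
  show "exp (L s) = F s" if "s \<in> S" for s
    using pos ln_eq that by (metis exp_ln)
qed

lemma filterlim_integral_at_top_of_inverse_le_linear:
  fixes f :: "real \<Rightarrow> real"
  assumes cont: "continuous_on {0..} f" and "0 < a" "0 < C"
    and pos: "\<And>t. 0 \<le> t \<Longrightarrow> 0 < f t" and bound: "\<And>t. 0 \<le> t \<Longrightarrow> 1 / f t \<le> a + C * t"
  shows "filterlim (\<lambda>t. integral {0..t} f) at_top at_top"
proof -
  have lower: "ln (a + C * t) / C - ln a / C \<le> integral {0..t} f" if "0 \<le> t" for t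
  proof -
    let ?F = "\<lambda>s. integral {0..s} f - ln (a + C * s) / C"
    have "?F 0 \<le> ?F t"
    proof (rule has_real_derivative_nonneg_imp_le[where S = "{0..t}" and f = ?F])
      fix x assume x: "x \<in> {0..t}"
      have ax: "0 < a + C * x"
        using \<open>0 < a\<close> \<open>0 < C\<close> x by (simp add: add_pos_nonneg)
      have "((\<lambda>s. ln (a + C * s)) has_real_derivative C / (a + C * x)) (at x within {0..t})"
        using ax by (auto intro!: derivative_eq_intros)
      then show "(?F has_real_derivative f x - (C / (a + C * x)) / C) (at x within {0..t})"
        using continuous_on_subset[OF cont] x
        by (intro DERIV_diff integral_has_real_derivative DERIV_cdivide) auto
      have "1 / (a + C * x) \<le> f x"
        using bound[of x] pos[of x] ax x by (simp add: field_simps)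
      then show "0 \<le> f x - (C / (a + C * x)) / C"
        using \<open>0 < C\<close> by simp
    qed (use that in auto)
    then show ?thesis
      by simp
  qed
  have "filterlim (\<lambda>t. ln (a + C * t) / C - ln a / C) at_top at_top"
    using \<open>0 < a\<close> \<open>0 < C\<close> by real_asymp
  moreover have "eventually (\<lambda>t. ln (a + C * t) / C - ln a / C \<le> integral {0..t} f) at_top"
    using lower by (auto intro: eventually_at_top_linorderI[of 0])
  ultimately show ?thesis
    by (rule filterlim_at_top_mono)
qed

lemma RB_solution_interval:
  assumes "RB_solution n \<rho> g J"
  shows "is_interval J" "0 \<in> J"
  using assms unfolding RB_solution_def by auto

lemma RB_solution_pos:
  "RB_solution n \<rho> g J \<Longrightarrow> I \<in> {1..2*n+1} \<Longrightarrow> t \<in> J \<Longrightarrow> 0 < g I t"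
  unfolding RB_solution_def by blast

lemma RB_solution_deriv_low:
  assumes "RB_solution n \<rho> g J" "i \<in> {1..n}" "t \<in> J"
  shows "(g i has_real_derivative
      g (2*n+1) t / g (n+i) t - \<rho> * g i t * g (2*n+1) t * Sigma_H n g t) (at t within J)"
proof -
  have "(g i has_real_derivative -2 * Ric_H n g i t + 2 * \<rho> * scal_H n g t * g i t) (at t within J)"
    using assms unfolding RB_solution_def by auto
  then show ?thesis
    by (rule DERIV_cong) (use assms(2) in \<open>auto simp: Ric_H_def scal_H_def\<close>)
qed

lemma RB_solution_deriv_high:
  assumes "RB_solution n \<rho> g J" "i \<in> {1..n}" "t \<in> J"
  shows "(g (n+i) has_real_derivative
      g (2*n+1) t / g i t - \<rho> * g (n+i) t * g (2*n+1) t * Sigma_H n g t) (at t within J)"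
proof -
  have "(g (n+i) has_real_derivative
      -2 * Ric_H n g (n+i) t + 2 * \<rho> * scal_H n g t * g (n+i) t) (at t within J)"
    using assms unfolding RB_solution_def by auto
  then show ?thesis
    by (rule DERIV_cong) (use assms(2) in \<open>auto simp: Ric_H_def scal_H_def\<close>)
qed

lemma RB_solution_deriv_top:
  assumes "RB_solution n \<rho> g J" "t \<in> J"
  shows "(g (2*n+1) has_real_derivative
      - (1 + \<rho>) * (g (2*n+1) t)\<^sup>2 * Sigma_H n g t) (at t within J)"
proof -
  have "(g (2*n+1) has_real_derivative
      -2 * Ric_H n g (2*n+1) t + 2 * \<rho> * scal_H n g t * g (2*n+1) t) (at t within J)"
    using assms unfolding RB_solution_def by auto
  then show ?thesis
    by (rule DERIV_cong) (auto simp: Ric_H_def scal_H_def power2_eq_square algebra_simps)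
qed

lemma RB_solution_Sigma_nonneg:
  assumes "RB_solution n \<rho> g J" "t \<in> J"
  shows "0 \<le> Sigma_H n g t"
  unfolding Sigma_H_def
proof (rule sum_nonneg)
  fix k assume "k \<in> {1..n}"
  then have "0 < g k t" "0 < g (n+k) t"
    using RB_solution_pos[OF assms(1) _ assms(2)] by auto
  then show "0 \<le> 1 / (g k t * g (n + k) t)"
    by simp
qed

lemma RB_solution_deriv_prod:
  assumes "RB_solution n \<rho> g J" "i \<in> {1..n}" "t \<in> J"
  shows "((\<lambda>s. g i s * g (n+i) s) has_real_derivative
      2 * g (2*n+1) t - 2 * \<rho> * (g i t * g (n+i) t) * g (2*n+1) t * Sigma_H n g t) (at t within J)"
proof -
  have pos: "0 < g i t" "0 < g (n+i) t"
    using RB_solution_pos[OF assms(1) _ assms(3)] assms(2) by auto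
  from DERIV_mult[OF RB_solution_deriv_low[OF assms] RB_solution_deriv_high[OF assms]] show ?thesis
    by (rule DERIV_cong) (use pos in \<open>simp add: field_simps\<close>)
qed

lemma RB_solution_ratio_deriv_zero:
  assumes "RB_solution n \<rho> g J" "i \<in> {1..n}" "t \<in> J"
  shows "((\<lambda>s. g i s / g (i + n) s) has_real_derivative 0) (at t within J)"
proof -
  have pos: "0 < g i t" "0 < g (n+i) t"
    using RB_solution_pos[OF assms(1) _ assms(3)] assms(2) by auto
  from DERIV_divide[OF RB_solution_deriv_low[OF assms] RB_solution_deriv_high[OF assms]
      pos(2)[THEN less_imp_neq, symmetric]]
  show ?thesis
    unfolding add.commute[of i n] by (rule DERIV_cong) (use pos in \<open>simp add: field_simps\<close>)
qed

lemma RB_solution_ln_deriv_top: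
  assumes "RB_solution n \<rho> g J" "t \<in> J"
  shows "((\<lambda>s. ln (g (2*n+1) s)) has_real_derivative
      - (1 + \<rho>) * g (2*n+1) t * Sigma_H n g t) (at t within J)"
proof -
  have pos: "0 < g (2*n+1) t"
    using RB_solution_pos[OF assms(1) _ assms(2)] by auto
  from DERIV_chain2[OF DERIV_ln_divide[OF pos] RB_solution_deriv_top[OF assms]] show ?thesis
    by (rule DERIV_cong) (use pos in \<open>simp add: power2_eq_square\<close>)
qed

lemma Sigma_H_sum_rates_eq:
  "(\<Sum>i=1..n. N / (g i t * g (n+i) t) - \<rho> * N * Sigma_H n g t)
    = (1 - real n * \<rho>) * N * Sigma_H n g t"
proof -
  have "(\<Sum>i=1..n. N / (g i t * g (n+i) t)) = N * Sigma_H n g t"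
    by (simp add: Sigma_H_def sum_distrib_left)
  then show ?thesis
    by (simp add: sum_subtractf algebra_simps)
qed

lemma RB_solution_sum_ln_deriv_low:
  assumes "RB_solution n \<rho> g J" "t \<in> J"
  shows "((\<lambda>s. \<Sum>i=1..n. ln (g i s)) has_real_derivative
      (1 - real n * \<rho>) * g (2*n+1) t * Sigma_H n g t) (at t within J)"
proof -
  have "((\<lambda>s. ln (g i s)) has_real_derivative
      g (2*n+1) t / (g i t * g (n+i) t) - \<rho> * g (2*n+1) t * Sigma_H n g t) (at t within J)"
    if i: "i \<in> {1..n}" for i
  proof -
    have pos: "0 < g i t" "0 < g (n+i) t"
      using RB_solution_pos[OF assms(1) _ assms(2)] i by auto
    from DERIV_chain2[OF DERIV_ln_divide[OF pos(1)] RB_solution_deriv_low[OF assms(1) i assms(2)]]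
    show ?thesis
      by (rule DERIV_cong) (use pos in \<open>simp add: field_simps\<close>)
  qed
  then show ?thesis
    unfolding Sigma_H_sum_rates_eq[symmetric] by (rule DERIV_sum)
qed

lemma RB_solution_sum_ln_deriv_high:
  assumes "RB_solution n \<rho> g J" "t \<in> J"
  shows "((\<lambda>s. \<Sum>i=1..n. ln (g (i + n) s)) has_real_derivative
      (1 - real n * \<rho>) * g (2*n+1) t * Sigma_H n g t) (at t within J)"
proof -
  have "((\<lambda>s. ln (g (i + n) s)) has_real_derivative
      g (2*n+1) t / (g i t * g (n+i) t) - \<rho> * g (2*n+1) t * Sigma_H n g t) (at t within J)"
    if i: "i \<in> {1..n}" for i
  proof -
    have pos: "0 < g i t" "0 < g (n+i) t"
      using RB_solution_pos[OF assms(1) _ assms(2)] i by auto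
    from DERIV_chain2[OF DERIV_ln_divide[OF pos(2)] RB_solution_deriv_high[OF assms(1) i assms(2)]]
    show ?thesis
      unfolding add.commute[of i n] by (rule DERIV_cong) (use pos in \<open>simp add: field_simps\<close>)
  qed
  then show ?thesis
    unfolding Sigma_H_sum_rates_eq[symmetric] by (rule DERIV_sum)
qed

lemma ln_prod_mult_powr:
  fixes f :: "'a \<Rightarrow> real"
  assumes "finite I" "\<And>i. i \<in> I \<Longrightarrow> 0 < f i" "0 < y"
  shows "ln ((\<Prod>i\<in>I. f i) * y powr c) = (\<Sum>i\<in>I. ln (f i)) + c * ln y"
proof -
  have "0 < (\<Prod>i\<in>I. f i)"
    using assms by (simp add: prod_pos)
  then have "ln ((\<Prod>i\<in>I. f i) * y powr c) = ln (\<Prod>i\<in>I. f i) + c * ln y"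
    using \<open>0 < y\<close> by (simp add: ln_mult ln_powr)
  also have "ln (\<Prod>i\<in>I. f i) = (\<Sum>i\<in>I. ln (f i))"
    using assms by (intro ln_prod) force+
  finally show ?thesis .
qed

lemma RB_solution_prod_powr_deriv_zero:
  fixes f :: "nat \<Rightarrow> real \<Rightarrow> real"
  assumes RB: "RB_solution n \<rho> g J" and "\<rho> \<noteq> -1" and t: "t \<in> J"
    and pos: "\<And>i s. i \<in> {1..n} \<Longrightarrow> s \<in> J \<Longrightarrow> 0 < f i s"
    and deriv: "((\<lambda>s. \<Sum>i=1..n. ln (f i s)) has_real_derivative
      (1 - real n * \<rho>) * g (2*n+1) t * Sigma_H n g t) (at t within J)"
  shows "((\<lambda>s. (\<Prod>i=1..n. f i s) * g (2*n+1) s powr ((1 - real n * \<rho>) / (1 + \<rho>)))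
      has_real_derivative 0) (at t within J)"
proof -
  let ?c = "(1 - real n * \<rho>) / (1 + \<rho>)"
  have top_pos: "0 < g (2*n+1) s" if "s \<in> J" for s
    using RB_solution_pos[OF RB _ that] by auto
  have "((\<lambda>s. (\<Sum>i=1..n. ln (f i s)) + ?c * ln (g (2*n+1) s)) has_real_derivative 0) (at t within J)"
    using DERIV_add[OF deriv DERIV_cmult[OF RB_solution_ln_deriv_top[OF RB t]]]
    by (rule DERIV_cong) (use \<open>\<rho> \<noteq> -1\<close> in \<open>simp add: field_simps\<close>)
  moreover have "0 < (\<Prod>i=1..n. f i s) * g (2*n+1) s powr ?c" if "s \<in> J" for s
    using pos that top_pos[OF that] by (intro mult_pos_pos prod_pos) auto
  moreover have "ln ((\<Prod>i=1..n. f i s) * g (2*n+1) s powr ?c)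
      = (\<Sum>i=1..n. ln (f i s)) + ?c * ln (g (2*n+1) s)" if "s \<in> J" for s
    using pos that top_pos[OF that] by (intro ln_prod_mult_powr) auto
  ultimately show ?thesis
    using has_real_derivative_via_ln[OF _ _ t, where D = 0] by simp
qed

lemma RB_solution_prod_mono:
  assumes RB: "RB_solution n \<rho> g J" and "\<rho> \<le> 0" and i: "i \<in> {1..n}"
    and "s \<in> J" "t \<in> J" "s \<le> t"
  shows "g i s * g (n+i) s \<le> g i t * g (n+i) t"
proof (rule has_real_derivative_nonneg_imp_le[OF RB_solution_interval(1)[OF RB]
      RB_solution_deriv_prod[OF RB i]])
  fix x assume x: "x \<in> J"
  have "0 < g i x" "0 < g (n+i) x" "0 < g (2*n+1) x"
    using RB_solution_pos[OF RB _ x] i by auto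
  moreover have "0 \<le> Sigma_H n g x"
    by (rule RB_solution_Sigma_nonneg[OF RB x])
  ultimately have "\<rho> * (g i x * g (n+i) x) * g (2*n+1) x * Sigma_H n g x \<le> 0"
    using \<open>\<rho> \<le> 0\<close> by (intro mult_nonpos_nonneg) auto
  then show "0 \<le> 2 * g (2*n+1) x - 2 * \<rho> * (g i x * g (n+i) x) * g (2*n+1) x * Sigma_H n g x"
    using \<open>0 < g (2*n+1) x\<close> by linarith
qed (use assms in auto)

lemma RB_solution_Sigma_antimono:
  assumes RB: "RB_solution n \<rho> g J" and "\<rho> \<le> 0" and "s \<in> J" "t \<in> J" "s \<le> t"
  shows "Sigma_H n g t \<le> Sigma_H n g s"
  unfolding Sigma_H_def
proof (rule sum_mono)
  fix k assume k: "k \<in> {1..n}"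
  have "0 < g k s * g (n+k) s"
    using RB_solution_pos[OF RB _ \<open>s \<in> J\<close>] k by auto
  then show "1 / (g k t * g (n + k) t) \<le> 1 / (g k s * g (n + k) s)"
    using RB_solution_prod_mono[OF RB \<open>\<rho> \<le> 0\<close> k \<open>s \<in> J\<close> \<open>t \<in> J\<close> \<open>s \<le> t\<close>]
    by (simp add: frac_le)
qed

lemma RB_solution_inverse_top_le:
  assumes RB: "RB_solution n \<rho> g J" and "\<rho> \<le> 0" and "0 \<le> t" "t \<in> J"
  shows "1 / g (2*n+1) t \<le> 1 / g (2*n+1) 0 + Sigma_H n g 0 * t"
proof -
  let ?N = "g (2*n+1)"
  have "{0..t} \<subseteq> J"
    using RB_solution_interval[OF RB] \<open>t \<in> J\<close> by (meson atLeastAtMost_iff is_interval_1 subsetI)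
  have "(\<lambda>s. Sigma_H n g 0 * s - inverse (?N s)) 0 \<le> (\<lambda>s. Sigma_H n g 0 * s - inverse (?N s)) t"
  proof (rule has_real_derivative_nonneg_imp_le[where S = "{0..t}"
        and f = "\<lambda>s. Sigma_H n g 0 * s - inverse (?N s)"])
    fix x assume x: "x \<in> {0..t}"
    then have xJ: "x \<in> J"
      using \<open>{0..t} \<subseteq> J\<close> by auto
    have "0 < ?N x"
      using RB_solution_pos[OF RB _ xJ] by auto
    then have "?N x \<noteq> 0"
      by simp
    from DERIV_diff[OF DERIV_cmult[OF DERIV_ident]
        DERIV_inverse_fun[OF DERIV_subset[OF RB_solution_deriv_top[OF RB xJ] \<open>{0..t} \<subseteq> J\<close>] this]]
    show "((\<lambda>s. Sigma_H n g 0 * s - inverse (?N s)) has_real_derivative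
        Sigma_H n g 0 - (1 + \<rho>) * Sigma_H n g x) (at x within {0..t})"
      by (rule DERIV_cong) (use \<open>?N x \<noteq> 0\<close> in \<open>simp add: field_simps power2_eq_square\<close>)
    have "0 \<le> Sigma_H n g x"
      by (rule RB_solution_Sigma_nonneg[OF RB xJ])
    moreover have "Sigma_H n g x \<le> Sigma_H n g 0"
      using RB_solution_Sigma_antimono[OF RB \<open>\<rho> \<le> 0\<close>] RB_solution_interval(2)[OF RB] xJ x by auto
    ultimately show "0 \<le> Sigma_H n g 0 - (1 + \<rho>) * Sigma_H n g x"
      using \<open>\<rho> \<le> 0\<close> mult_nonpos_nonneg[of \<rho> "Sigma_H n g x"] by (simp add: algebra_simps)
  qed (use \<open>0 \<le> t\<close> in auto)
  then show ?thesis
    by (simp add: divide_inverse)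
qed

lemma RB_solution_integral_top_at_top:
  assumes RB: "RB_solution n \<rho> g J" and "\<rho> < 0" and J: "{0..} \<subseteq> J"
  shows "filterlim (\<lambda>t. integral {0..t} (g (2*n+1))) at_top at_top"
proof (rule filterlim_integral_at_top_of_inverse_le_linear)
  let ?N = "g (2*n+1)"
  have J0: "0 \<in> J"
    using J by auto
  show "continuous_on {0..} ?N"
    using continuous_on_subset[OF DERIV_continuous_on[OF RB_solution_deriv_top[OF RB]] J] by blast
  show "0 < 1 / ?N 0" "0 < Sigma_H n g 0 + 1"
    using RB_solution_pos[OF RB _ J0] RB_solution_Sigma_nonneg[OF RB J0] by auto
  show "0 < ?N t" if "0 \<le> t" for t
    using RB_solution_pos[OF RB] J that by auto
  show "1 / ?N t \<le> 1 / ?N 0 + (Sigma_H n g 0 + 1) * t" if "0 \<le> t" for t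
    using RB_solution_inverse_top_le[OF RB _ that] \<open>\<rho> < 0\<close> J that by (auto simp: algebra_simps)
qed

lemma power_law_of_deriv:
  fixes f :: "real \<Rightarrow> real"
  assumes K: "is_interval K" "0 \<in> K" "t \<in> K" and pos: "\<And>s. s \<in> K \<Longrightarrow> 0 < 1 + b * s"
    and deriv: "\<And>s. s \<in> K \<Longrightarrow> (f has_real_derivative c * b / (1 + b * s) * f s) (at s within K)"
  shows "f t = f 0 * (1 + b * t) powr c"
proof -
  have "((\<lambda>s. c * ln (1 + b * s)) has_real_derivative c * b / (1 + b * s)) (at s within K)"
    if "s \<in> K" for s
    using pos[OF that] by (auto intro!: derivative_eq_intros)
  then have "f t = f 0 * exp (c * ln (1 + b * t) - c * ln (1 + b * 0))"
    by (rule linear_ode_eq_exp[OF K _ deriv])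
  then show ?thesis
    using pos[OF K(3)] by (simp add: powr_def)
qed

lemma is_interval_affine_pos: "is_interval {s :: real. 0 < 1 + b * s}"
proof -
  have "{s :: real. 0 < 1 + b * s} = {s. inner b s > -1}"
    by auto
  then show ?thesis
    using convex_halfspace_gt is_interval_convex_1 by metis
qed

lemma RB_solution_prod_eq:
  assumes RB: "RB_solution n \<rho> g J" and i: "i \<in> {1..n}" and j: "j \<in> {1..n}" and "t \<in> J"
    and eq0: "g i 0 * g (n+i) 0 = g j 0 * g (n+j) 0"
  shows "g i t * g (n+i) t = g j t * g (n+j) t"
proof -
  let ?N = "g (2*n+1)"
  let ?rate = "\<lambda>s. -2 * \<rho> * ?N s * Sigma_H n g s"
  define u where "u s = -2 * \<rho> / (real n + 1) * ((\<Sum>k=1..n. ln (g k s)) - real n * ln (?N s))" for s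
  have "(u has_real_derivative ?rate s) (at s within J)" if "s \<in> J" for s
    unfolding u_def
    by (rule DERIV_cong[OF DERIV_cmult[OF DERIV_diff[OF RB_solution_sum_ln_deriv_low[OF RB that]
            DERIV_cmult[OF RB_solution_ln_deriv_top[OF RB that]]]]])
      (simp add: field_simps)
  moreover have "((\<lambda>s. g i s * g (n+i) s - g j s * g (n+j) s) has_real_derivative
      ?rate s * (g i s * g (n+i) s - g j s * g (n+j) s)) (at s within J)" if "s \<in> J" for s
    using DERIV_diff[OF RB_solution_deriv_prod[OF RB i that] RB_solution_deriv_prod[OF RB j that]]
    by (rule DERIV_cong) (simp add: algebra_simps)
  ultimately have "g i t * g (n+i) t - g j t * g (n+j) t
      = (g i 0 * g (n+i) 0 - g j 0 * g (n+j) 0) * exp (u t - u 0)"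
    using RB_solution_interval[OF RB] \<open>t \<in> J\<close> by (intro linear_ode_eq_exp) auto
  then show ?thesis
    using eq0 by simp
qed

lemma Sigma_H_eq_of_prod_eq:
  assumes "\<And>i. i \<in> {1..n} \<Longrightarrow> g i t * g (n+i) t = P"
  shows "Sigma_H n g t = real n / P"
  using assms by (simp add: Sigma_H_def)

lemma RB_solution_deriv_balanced:
  assumes RB: "RB_solution n \<rho> g J" and s: "s \<in> J" and j: "j \<in> {1..2*n}"
    and bal: "\<And>i. i \<in> {1..n} \<Longrightarrow> g i s * g (n+i) s = P"
  shows "(g j has_real_derivative (1 - real n * \<rho>) * (g (2*n+1) s / P) * g j s) (at s within J)"
proof -
  have Sigma: "Sigma_H n g s = real n / P"
    using bal by (rule Sigma_H_eq_of_prod_eq)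
  consider (low) "j \<in> {1..n}" | (high) i where "i \<in> {1..n}" "j = n + i"
  proof (cases "j \<le> n")
    case True
    then show ?thesis
      using j that(1) by auto
  next
    case False
    then show ?thesis
      using j that(2)[of "j - n"] by auto
  qed
  then show ?thesis
  proof cases
    case low
    have pos: "0 < g j s" "0 < g (n+j) s"
      using RB_solution_pos[OF RB _ s] low by auto
    from RB_solution_deriv_low[OF RB low s, unfolded Sigma] show ?thesis
      unfolding bal[OF low, symmetric] by (rule DERIV_cong) (use pos in \<open>simp add: field_simps\<close>)
  next
    case (high i)
    have pos: "0 < g i s" "0 < g (n+i) s"
      using RB_solution_pos[OF RB _ s] high by auto
    from RB_solution_deriv_high[OF RB high(1) s, unfolded Sigma] show ?thesis
      unfolding bal[OF high(1), symmetric] high(2)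
      by (rule DERIV_cong) (use pos in \<open>simp add: field_simps\<close>)
  qed
qed

lemma RB_solution_deriv_top_balanced:
  assumes RB: "RB_solution n \<rho> g J" and "s \<in> J"
    and bal: "\<And>i. i \<in> {1..n} \<Longrightarrow> g i s * g (n+i) s = P"
  shows "(g (2*n+1) has_real_derivative
      - (1 + \<rho>) * real n * (g (2*n+1) s / P) * g (2*n+1) s) (at s within J)"
proof -
  have "Sigma_H n g s = real n / P"
    using bal by (rule Sigma_H_eq_of_prod_eq)
  from RB_solution_deriv_top[OF RB \<open>s \<in> J\<close>] show ?thesis
    by (rule DERIV_cong) (simp add: \<open>Sigma_H n g s = real n / P\<close> power2_eq_square)
qed

lemma RB_solution_prod_over_top_linear:
  assumes RB: "RB_solution n \<rho> g J" and "1 \<le> n" and "t \<in> J"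
    and bal: "\<And>i s. i \<in> {1..n} \<Longrightarrow> s \<in> J \<Longrightarrow> g i s * g (n+i) s = g 1 s * g (n+1) s"
  shows "g 1 t * g (n+1) t / g (2*n+1) t
    = g 1 0 * g (n+1) 0 / g (2*n+1) 0 + (real n + 2 - real n * \<rho>) * t"
proof -
  let ?P = "\<lambda>s. g 1 s * g (n+1) s"
  let ?N = "g (2*n+1)"
  have one: "1 \<in> {1..n}"
    using \<open>1 \<le> n\<close> by auto
  have alg: "((2 - 2 * \<rho> * real n) * N * N - P * (- (1 + \<rho>) * real n * (N / P) * N)) / (N * N)
      = real n + 2 - real n * \<rho>" if "0 < N" "0 < P" for N P :: real
    using that by (simp add: field_simps)
  have "((\<lambda>s. ?P s / ?N s - (real n + 2 - real n * \<rho>) * s) has_real_derivative 0) (at s within J)"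
    if "s \<in> J" for s
  proof -
    have "0 < g 1 s" "0 < g (n+1) s" and pos: "0 < ?N s" "0 < ?P s"
      using RB_solution_pos[OF RB _ that] \<open>1 \<le> n\<close> by auto
    then have "2 * ?N s - 2 * \<rho> * ?P s * ?N s * (real n / ?P s) = (2 - 2 * \<rho> * real n) * ?N s"
      by (simp add: field_simps)
    moreover have "Sigma_H n g s = real n / ?P s"
      using bal that by (intro Sigma_H_eq_of_prod_eq)
    ultimately have dP: "(?P has_real_derivative (2 - 2 * \<rho> * real n) * ?N s) (at s within J)"
      using RB_solution_deriv_prod[OF RB one that] by simp
    have "((\<lambda>s. ?P s / ?N s) has_real_derivative real n + 2 - real n * \<rho>) (at s within J)"
      using DERIV_divide[OF dP RB_solution_deriv_top_balanced[OF RB that bal[OF _ that]]] pos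
      unfolding alg[OF pos] by simp
    moreover have "((\<lambda>s. (real n + 2 - real n * \<rho>) * s) has_real_derivative real n + 2 - real n * \<rho>)
        (at s within J)"
      by (auto intro!: derivative_eq_intros)
    ultimately show ?thesis
      using DERIV_diff by fastforce
  qed
  from has_real_derivative_zero_imp_eq[OF RB_solution_interval(1)[OF RB] this \<open>t \<in> J\<close>
      RB_solution_interval(2)[OF RB]]
  show ?thesis
    by simp
qed

lemma RB_solution_top_over_prod_balanced:
  assumes RB: "RB_solution n \<rho> g J" and "1 \<le> n"
    and bal: "\<And>i s. i \<in> {1..n} \<Longrightarrow> s \<in> J \<Longrightarrow> g i s * g (n+i) s = g 1 s * g (n+1) s"
    and c: "real n + 2 - real n * \<rho> \<noteq> 0"
    and b: "b = (real n + 2 - real n * \<rho>) * g (2*n+1) 0 / (g 1 0 * g (n+1) 0)"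
    and "s \<in> J" "0 < 1 + b * s"
  shows "g (2*n+1) s / (g 1 s * g (n+1) s) = b / ((real n + 2 - real n * \<rho>) * (1 + b * s))"
proof -
  have alg: "N / P = b / (a * (1 + b * s))"
    if "P / N = P0 / N0 + a * s" "b = a * N0 / P0" "a \<noteq> 0"
      "0 < N" "0 < P" "0 < N0" "0 < P0" "0 < 1 + b * s"
    for N P N0 P0 a :: real
  proof -
    have "a = b * P0 / N0"
      using that by (simp add: field_simps)
    then have "P / N = P0 / N0 * (1 + b * s)"
      using that(1,6) by (simp add: field_simps)
    then have "N / P = N0 / (P0 * (1 + b * s))"
      using that(4-8) mult_pos_pos[OF that(7,8)] by (simp add: field_simps)
    also have "\<dots> = b / (a * (1 + b * s))"
    proof -
      have "P0 * (1 + b * s) \<noteq> 0" "a * (1 + b * s) \<noteq> 0"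
        using that(3,7,8) by auto
      moreover have "N0 * a = b * P0"
        using that(2,7) by simp
      ultimately show ?thesis
        by (simp add: frac_eq_eq)
    qed
    finally show ?thesis .
  qed
  have "0 \<in> J"
    using RB_solution_interval[OF RB] by simp
  have "0 < g 1 r" "0 < g (n+1) r" "0 < g (2*n+1) r" if "r \<in> J" for r
    using RB_solution_pos[OF RB _ that] \<open>1 \<le> n\<close> by auto
  with \<open>0 \<in> J\<close> \<open>s \<in> J\<close> \<open>0 < 1 + b * s\<close> show ?thesis
    by (intro alg[OF RB_solution_prod_over_top_linear[OF RB \<open>1 \<le> n\<close> \<open>s \<in> J\<close> bal] b c]) auto
qed

lemma RB_solution_balanced_power_laws:
  assumes RB: "RB_solution n \<rho> g J" and "1 \<le> n"
    and bal0: "\<forall>i\<in>{1..n}. g i 0 * g (n + i) 0 = g 1 0 * g (1 + n) 0"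
    and c: "real n + 2 - real n * \<rho> \<noteq> 0"
    and b: "b = (real n + 2 - real n * \<rho>) * g (2*n+1) 0 / (g 1 0 * g (1 + n) 0)"
    and "t \<in> J" "0 < 1 + b * t"
  shows "\<forall>j\<in>{1..2*n}.
      g j t = g j 0 * (1 + b * t) powr ((1 - real n * \<rho>) / (real n + 2 - real n * \<rho>))"
    and "g (2*n+1) t
      = g (2*n+1) 0 * (1 + b * t) powr ((real n + real n * \<rho>) / (real n * \<rho> - real n - 2))"
proof -
  let ?c = "real n + 2 - real n * \<rho>"
  let ?P = "\<lambda>s. g 1 s * g (n+1) s"
  let ?N = "g (2*n+1)"
  define K where "K = J \<inter> {s. 0 < 1 + b * s}"
  have K: "is_interval K" "0 \<in> K" "t \<in> K" and KJ: "K \<subseteq> J"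
    and K_pos: "\<And>s. s \<in> K \<Longrightarrow> 0 < 1 + b * s"
    using RB_solution_interval[OF RB] is_interval_affine_pos \<open>t \<in> J\<close> \<open>0 < 1 + b * t\<close>
    unfolding K_def by (auto intro: is_interval_Int)
  have one: "1 \<in> {1..n}"
    using \<open>1 \<le> n\<close> by auto
  have bal: "\<And>i s. i \<in> {1..n} \<Longrightarrow> s \<in> J \<Longrightarrow> g i s * g (n+i) s = ?P s"
    using RB_solution_prod_eq[OF RB _ one] bal0 by (simp add: add.commute)
  have rate: "?N s / ?P s = b / (?c * (1 + b * s))" if "s \<in> K" for s
    using RB_solution_top_over_prod_balanced[OF RB \<open>1 \<le> n\<close> bal c b[unfolded add.commute[of 1 n]]]
      that KJ K_pos by auto
  show "\<forall>j\<in>{1..2*n}. g j t = g j 0 * (1 + b * t) powr ((1 - real n * \<rho>) / ?c)"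
  proof
    fix j assume j: "j \<in> {1..2*n}"
    show "g j t = g j 0 * (1 + b * t) powr ((1 - real n * \<rho>) / ?c)"
    proof (rule power_law_of_deriv[OF K K_pos])
      fix s assume s: "s \<in> K"
      then have "s \<in> J"
        using KJ by auto
      have "(1 - real n * \<rho>) * (?N s / ?P s) * g j s
          = (1 - real n * \<rho>) / ?c * b / (1 + b * s) * g j s"
        unfolding rate[OF s] by simp
      with DERIV_subset[OF RB_solution_deriv_balanced[OF RB \<open>s \<in> J\<close> j bal[OF _ \<open>s \<in> J\<close>]] KJ]
      show "(g j has_real_derivative (1 - real n * \<rho>) / ?c * b / (1 + b * s) * g j s)
          (at s within K)"
        by (rule DERIV_cong)
    qed
  qed
  have expo: "(real n + real n * \<rho>) / (real n * \<rho> - real n - 2) = - (1 + \<rho>) * real n / ?c"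
  proof -
    have "real n * \<rho> - real n - 2 \<noteq> 0"
      using c by simp
    with c show ?thesis
      by (simp add: field_simps)
  qed
  show "?N t = ?N 0 * (1 + b * t) powr ((real n + real n * \<rho>) / (real n * \<rho> - real n - 2))"
    unfolding expo
  proof (rule power_law_of_deriv[OF K K_pos])
    fix s assume s: "s \<in> K"
    then have "s \<in> J"
      using KJ by auto
    have "- (1 + \<rho>) * real n * (?N s / ?P s) * ?N s
        = - (1 + \<rho>) * real n / ?c * b / (1 + b * s) * ?N s"
      unfolding rate[OF s] by simp
    with DERIV_subset[OF RB_solution_deriv_top_balanced[OF RB \<open>s \<in> J\<close> bal[OF _ \<open>s \<in> J\<close>]] KJ]
    show "(?N has_real_derivative - (1 + \<rho>) * real n / ?c * b / (1 + b * s) * ?N s) (at s within K)"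
      by (rule DERIV_cong)
  qed
qed

theorem theorem2p4:
  fixes n :: nat and \<rho> :: real and g :: "nat \<Rightarrow> real \<Rightarrow> real" and J :: "real set"
  assumes "1 \<le> n"
    and "RB_solution n \<rho> g J"
  shows
    "(\<forall>i\<in>{1..n}. \<forall>t\<in>J.
        ((\<lambda>s. g i s / g (i + n) s) has_real_derivative 0) (at t within J))
   \<and> (\<rho> \<noteq> -1 \<longrightarrow> (\<forall>t\<in>J.
        ((\<lambda>s. (\<Prod>i=1..n. g i s) * g (2*n+1) s powr ((1 - real n * \<rho>) / (1 + \<rho>)))
           has_real_derivative 0) (at t within J)
      \<and> ((\<lambda>s. (\<Prod>i=1..n. g (i + n) s) * g (2*n+1) s powr ((1 - real n * \<rho>) / (1 + \<rho>)))
           has_real_derivative 0) (at t within J)))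
   \<and> (\<rho> < 0 \<longrightarrow> {0..} \<subseteq> J \<longrightarrow>
        filterlim (\<lambda>t. integral {0..t} (g (2*n+1))) at_top at_top)
   \<and> ((\<forall>i\<in>{1..n}. g i 0 * g (n + i) 0 = g 1 0 * g (1 + n) 0) \<longrightarrow>
        real n + 2 - real n * \<rho> \<noteq> 0 \<longrightarrow>
        (let b = (real n + 2 - real n * \<rho>) * g (2*n+1) 0 / (g 1 0 * g (1 + n) 0) in
          \<forall>t\<in>J. 1 + b * t > 0 \<longrightarrow>
            (\<forall>j\<in>{1..2*n}. g j t = g j 0 * (1 + b * t) powr
                 ((1 - real n * \<rho>) / (real n + 2 - real n * \<rho>)))
            \<and> g (2*n+1) t = g (2*n+1) 0 * (1 + b * t) powr
                 ((real n + real n * \<rho>) / (real n * \<rho> - real n - 2))))"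
proof -
  note RB = assms(2)
  have pos: "0 < g i s" "0 < g (i + n) s" if "i \<in> {1..n}" "s \<in> J" for i s
    using RB_solution_pos[OF RB _ that(2)] that(1) by auto
  show ?thesis
    unfolding Let_def
    apply (intro conjI impI ballI)
    subgoal by (rule RB_solution_ratio_deriv_zero[OF RB])
    subgoal
      by (rule RB_solution_prod_powr_deriv_zero[OF RB _ _ pos(1) RB_solution_sum_ln_deriv_low[OF RB]])
    subgoal
      by (rule RB_solution_prod_powr_deriv_zero[OF RB _ _ pos(2) RB_solution_sum_ln_deriv_high[OF RB]])
    subgoal by (rule RB_solution_integral_top_at_top[OF RB])
    subgoal using RB_solution_balanced_power_laws(1)[OF RB assms(1) _ _ refl] by blast
    subgoal by (rule RB_solution_balanced_power_laws(2)[OF RB assms(1) _ _ refl])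
    done
qed

end
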